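(* Let $p$ be a prime, $q$ a power of $p$, $V$ a finite-dimensional $\mathbb{F}_q$-vector space, and $k=q^ar$ with integers $a\ge0$, $1\le r\le q-1$. For each nonzero $y\in V^*$ and any linear complement $W$ of $\mathbb{F}_q y$ in $V^*$, one has the equality of ideals of $\mathrm{Sym}^*(V^* )$ $$I(V^*,k)+(y^k)=I(W,qk)+(y^k),$$ where $I(W,qk)$ denotes the ideal of $\mathrm{Sym}^*(V^* )$ generated by the generators of $I(W,qk)\subset\mathrm{Sym}^*(W)$.
   Context: For a finite-dimensional $\mathbb{F}_q$-vector space $U$ (here $U=V^*$ or $U=W$), fix for each line $\ell$ of $U$ a nonzero $u_\ell\in\ell$; for a hyperplane $H$ of $U$, $V_{H,U}=\prod_{\ell\subset U,\ \ell\not\subset H}u_\ell$; $I(U,m)$ is the ideal of $\mathrm{Sym}^*(U)$ generated by all $V_{H,U}^m$ with $H$ a hyperplane of $U$ (independent, up to units, of the choice of $u_\ell$). *)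

theory Defs
  imports "HOL-Analysis.Analysis" "HOL-Library.Poly_Mapping"
begin

text \<open>Model: V^* is the coordinate space 'k^'n (coordinates w.r.t. a fixed basis of V^*),
  and Sym^*(V^*) is the polynomial ring 'k[x_i | i :: 'n], represented as polynomial mappings
  from monomials to coefficients.\<close>

type_synonym ('k, 'n) sympoly = "('n \<Rightarrow>\<^sub>0 nat) \<Rightarrow>\<^sub>0 'k"

definition lin :: "'k::field ^ 'n::finite \<Rightarrow> ('k, 'n) sympoly" where
  "lin u = (\<Sum>i\<in>UNIV. Poly_Mapping.single (Poly_Mapping.single i 1) (u $ i))"

definition gen_ideal :: "'a::comm_ring_1 set \<Rightarrow> 'a set" where
  "gen_ideal S = {x. \<exists>F c. finite F \<and> F \<subseteq> S \<and> x = (\<Sum>g\<in>F. c g * g)}"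

definition ideal_sum :: "'a::comm_ring_1 set \<Rightarrow> 'a set \<Rightarrow> 'a set" where
  "ideal_sum I J = gen_ideal (I \<union> J)"

definition lines_of :: "('k::field ^ 'n::finite) set \<Rightarrow> ('k ^ 'n) set set" where
  "lines_of U = {vec.span {u} | u. u \<in> U \<and> u \<noteq> 0}"

definition hyperplanes_of :: "('k::field ^ 'n::finite) set \<Rightarrow> ('k ^ 'n) set set" where
  "hyperplanes_of U = {H. vec.subspace H \<and> H \<subseteq> U \<and> vec.dim H + 1 = vec.dim U}"

definition line_rep :: "('k::field ^ 'n::finite) set \<Rightarrow> 'k ^ 'n" where
  "line_rep l = (SOME u. u \<in> l \<and> u \<noteq> 0)"

definition VH :: "('k::field ^ 'n::finite) set \<Rightarrow> ('k ^ 'n) set \<Rightarrow> ('k, 'n) sympoly" where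
  "VH U H = (\<Prod>l\<in>{l \<in> lines_of U. \<not> l \<subseteq> H}. lin (line_rep l))"

definition I_ideal :: "('k::field ^ 'n::finite) set \<Rightarrow> nat \<Rightarrow> ('k, 'n) sympoly set" where
  "I_ideal U m = gen_ideal {VH U H ^ m | H. H \<in> hyperplanes_of U}"

end

(*
  Write V^* = W + F_q y. If a hyperplane H of V^* does not contain y, then F_q y is one of the lines
  in the product V_{H,V^*}, so V_{H,V^*}^k lies in (y^k). If y \<in> H, then H \<inter> W is a hyperplane of W,
  and every hyperplane H' of W arises in this way, from H = span (H' + F_q y). The lines of V^* not in H
  are exactly the lines F_q (u + c y) with F_q u a line of W not in H and c \<in> F_q, so up to a nonzero
  scalar V_{H,V^*} = \<Prod>_u \<Prod>_c (u + c y) = \<Prod>_u (u^q - u y^(q-1)), the homogenized form of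
  \<Prod>_c (X + c) = X^q - X. As k = q^a r with r < q, the Frobenius gives (u^q - u y^(q-1))^k \<equiv> u^(qk)
  modulo y^k. Hence V_{H,V^*}^k is a unit multiple of V_{H \<inter> W,W}^(qk) modulo y^k.
*)

theory Submission
  imports Defs "HOL-Computational_Algebra.Polynomial" "HOL-Number_Theory.Residues"
begin

section \<open>Ideals generated by sets\<close>

interpretation ring_module: Modules.module "(*) :: 'a::comm_ring_1 \<Rightarrow> 'a \<Rightarrow> 'a"
  by unfold_locales (simp_all add: algebra_simps)

(* As a simp rule, a * (b * x) = (a * b) * x would loop against mult.assoc in algebra_simps. *)
declare ring_module.scale_scale [simp del]

lemma gen_ideal_eq_span: "gen_ideal S = ring_module.span S"
  unfolding gen_ideal_def ring_module.span_explicit by blast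

lemma ideal_sum_gen_ideal: "ideal_sum (gen_ideal A) (gen_ideal B) = gen_ideal (A \<union> B)"
proof -
  have "ring_module.span (ring_module.span A \<union> ring_module.span B) \<subseteq> ring_module.span (A \<union> B)"
    by (intro ring_module.span_minimal Un_least ring_module.span_mono) auto
  moreover have "A \<union> B \<subseteq> ring_module.span A \<union> ring_module.span B"
    using ring_module.span_superset by blast
  ultimately show ?thesis
    unfolding ideal_sum_def gen_ideal_eq_span by (blast dest: ring_module.span_mono)
qed

lemma ideal_sum_principal_eqI:
  assumes "A \<subseteq> gen_ideal (insert y B)" and "B \<subseteq> gen_ideal (insert y A)"
  shows "ideal_sum (gen_ideal A) (gen_ideal {y}) = ideal_sum (gen_ideal B) (gen_ideal {y})"
proof -
  have "ideal_sum (gen_ideal C) (gen_ideal {y}) = ring_module.span (insert y C)" for C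
    by (subst ideal_sum_gen_ideal) (simp add: gen_ideal_eq_span)
  moreover have "insert y A \<subseteq> ring_module.span (insert y B)" "insert y B \<subseteq> ring_module.span (insert y A)"
    using assms by (simp_all add: gen_ideal_eq_span ring_module.span_base)
  ultimately show ?thesis
    by (simp add: ring_module.span_eq)
qed

lemma gen_ideal_insert_if_dvd:
  assumes "y dvd g"
  shows "g \<in> gen_ideal (insert y G)"
proof -
  obtain t where "g = t * y"
    using assms by (metis dvdE mult.commute)
  then show ?thesis
    unfolding gen_ideal_eq_span by (simp add: ring_module.span_base ring_module.span_scale)
qed

lemma gen_ideal_insert_if_dvd_diff:
  assumes "y dvd g - u * g'" and "g' \<in> G"
  shows "g \<in> gen_ideal (insert y G)"
proof -
  obtain t where "g - u * g' = y * t"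
    using assms(1) by blast
  then have "g = u * g' + t * y"
    by (simp add: algebra_simps)
  moreover have "u * g' \<in> ring_module.span (insert y G)" "t * y \<in> ring_module.span (insert y G)"
    using assms(2) by (simp_all add: ring_module.span_base ring_module.span_scale)
  ultimately show ?thesis
    unfolding gen_ideal_eq_span by (simp add: ring_module.span_add)
qed

lemma dvd_diff_mult_swap:
  fixes a b u v :: "'a::comm_ring_1"
  assumes "u * v = 1" and "y dvd a - u * b"
  shows "y dvd b - v * a"
proof -
  have "b - v * a = - v * (a - u * b)"
    by (simp add: algebra_simps) (simp add: assms(1) flip: mult.assoc)
  then show ?thesis
    using assms(2) by simp
qed

lemma dvd_prod_diff:
  fixes f g :: "'b \<Rightarrow> 'a::comm_ring_1"
  assumes "\<And>i. i \<in> A \<Longrightarrow> m dvd f i - g i"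
  shows "m dvd prod f A - prod g A"
  using assms
proof (induction A rule: infinite_finite_induct)
  case (insert a A)
  have "prod f (insert a A) - prod g (insert a A)
      = f a * (prod f A - prod g A) + (f a - g a) * prod g A"
    using insert.hyps by (simp add: algebra_simps)
  then show ?case
    using insert by simp
qed auto

section \<open>Finite fields and the Frobenius\<close>

(* The library's finite_field_power_card_eq_same is stated for the class finite_field,
   to which a type variable of sort {field, finite} does not belong. *)
lemma finite_field_power_card: "(x::'a::{field,finite}) ^ CARD('a) = x"
proof (cases "x = 0")
  case False
  have "x * (\<Prod>y\<in>UNIV-{0}. x * y) = x * x ^ (CARD('a) - 1) * \<Prod>(UNIV-{0})"
    by (simp add: prod.distrib mult_ac)
  also have "x * x ^ (CARD('a) - 1) = x ^ CARD('a)"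
    by (simp flip: power_Suc)
  also have "(\<Prod>y\<in>UNIV-{0}. x * y) = (\<Prod>y\<in>UNIV-{0}. y)"
    by (rule prod.reindex_bij_witness[of _ "\<lambda>y. y / x" "\<lambda>y. x * y"]) (use False in auto)
  finally show ?thesis
    by simp
qed simp

lemma prod_X_plus_const_finite_field:
  "(\<Prod>c\<in>(UNIV::'a::{field,finite} set). [:c, 1:]) = Polynomial.monom 1 CARD('a) - Polynomial.monom 1 1"
proof (rule poly_eqI_degree_lead_coeff[where A = UNIV and n = "CARD('a)"])
  define m where "m = CARD('a) - 2"
  have "card {0::'a, 1} \<le> CARD('a)"
    by (rule card_mono) auto
  then have m: "CARD('a) = Suc (Suc m)"
    by (simp add: m_def)
  have degree: "degree (\<Prod>c\<in>(UNIV::'a set). [:c, 1:]) = CARD('a)"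
    by (subst degree_prod_eq_sum_degree) auto
  moreover have "lead_coeff (\<Prod>c\<in>(UNIV::'a set). [:c, 1:]) = 1"
    by (subst lead_coeff_prod) auto
  ultimately show "Polynomial.coeff (\<Prod>c\<in>(UNIV::'a set). [:c, 1:]) CARD('a)
      = Polynomial.coeff (Polynomial.monom 1 CARD('a) - Polynomial.monom 1 1) CARD('a)"
    by (simp add: m)
  show "degree (\<Prod>c\<in>(UNIV::'a set). [:c, 1:]) \<le> CARD('a)"
    using degree by simp
  show "degree (Polynomial.monom (1::'a) CARD('a) - Polynomial.monom 1 1) \<le> CARD('a)"
    by (intro order.trans[OF degree_diff_le_max]) (simp add: m degree_monom_eq)
  fix z :: 'a
  have "poly (\<Prod>c\<in>UNIV. [:c, 1:]) z = (\<Prod>c\<in>UNIV. c + z)"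
    by (simp add: poly_prod)
  also have "\<dots> = 0"
    by (rule prod_zero) (auto intro!: exI[of _ "- z"])
  finally show "poly (\<Prod>c\<in>UNIV. [:c, 1:]) z = poly (Polynomial.monom 1 CARD('a) - Polynomial.monom 1 1) z"
    by (simp add: poly_monom finite_field_power_card)
qed simp

lemma CHAR_poly_mapping [simp]: "CHAR('a::comm_monoid_add \<Rightarrow>\<^sub>0 'b::comm_semiring_1) = CHAR('b)"
proof (rule CHAR_eqI)
  show "of_nat CHAR('b) = (0 :: 'a \<Rightarrow>\<^sub>0 'b)"
    by (simp flip: single_of_nat)
next
  fix n assume "of_nat n = (0 :: 'a \<Rightarrow>\<^sub>0 'b)"
  then have "Poly_Mapping.lookup (of_nat n :: 'a \<Rightarrow>\<^sub>0 'b) 0 = 0"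
    by simp
  then have "(of_nat n :: 'b) = 0"
    by (simp add: lookup_of_nat)
  then show "CHAR('b) dvd n"
    by (simp add: of_nat_eq_0_iff_char_dvd)
qed

lemma CHAR_eq_if_card_eq_prime_power:
  assumes "prime p" and "CARD('a::{field,finite}) = p ^ e"
  shows "CHAR('a) = p"
proof -
  have "prime CHAR('a)"
    by (intro prime_CHAR_semidom finite_imp_CHAR_pos) simp
  moreover have "CHAR('a) dvd p ^ e"
    using CHAR_dvd_CARD[where 'a = 'a] assms(2) by simp
  ultimately show ?thesis
    using assms(1) prime_dvd_power primes_dvd_imp_eq by blast
qed

lemma power_dvd_add_power_diff:
  fixes a b :: "'a::comm_ring_1"
  assumes "prime CHAR('a)" and "N = CHAR('a) ^ m"
  shows "b ^ N dvd (a + b) ^ (N * r) - a ^ (N * r)"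
proof -
  have "(a + b) ^ (N * r) - a ^ (N * r) = (a ^ N + b ^ N) ^ r - (a ^ N) ^ r"
    using freshmans_dream'[OF assms] by (simp add: power_mult)
  moreover have "(a ^ N + b ^ N) - a ^ N dvd (a ^ N + b ^ N) ^ r - (a ^ N) ^ r"
    by (metis power_diff_sumr2 dvd_triv_left)
  ultimately show ?thesis
    by simp
qed

lemma power_dvd_frobenius_form_power_diff:
  fixes x y :: "'a::comm_ring_1"
  assumes "prime CHAR('a)" and "q = CHAR('a) ^ e" and "k = q ^ a * r" and "r \<le> q - 1"
  shows "y ^ k dvd (x ^ q - x * y ^ (q - 1)) ^ k - x ^ (q * k)"
proof -
  define N where "N = q ^ a"
  have "y ^ k dvd (y ^ (q - 1)) ^ N"
    using assms(3,4) by (simp add: N_def le_imp_power_dvd mult.commute flip: power_mult)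
  also have "\<dots> dvd (- x) ^ N * (y ^ (q - 1)) ^ N"
    by simp
  also have "\<dots> = (- (x * y ^ (q - 1))) ^ N"
    by (metis mult_minus_left power_mult_distrib)
  also have "\<dots> dvd (x ^ q + - (x * y ^ (q - 1))) ^ (N * r) - (x ^ q) ^ (N * r)"
    using assms(1) by (rule power_dvd_add_power_diff[where m = "e * a"])
      (simp add: N_def assms(2) power_mult)
  finally show ?thesis
    by (simp add: assms(3) N_def power_mult)
qed

section \<open>Linear forms in Sym(V^*)\<close>

definition sympoly_const :: "'k::comm_ring_1 \<Rightarrow> ('k, 'n) sympoly" where
  "sympoly_const c = Poly_Mapping.single 0 c"

lemma sympoly_const_0 [simp]: "sympoly_const 0 = 0"
  and sympoly_const_1 [simp]: "sympoly_const 1 = 1"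
  and sympoly_const_add: "sympoly_const (a + b) = sympoly_const a + sympoly_const b"
  and sympoly_const_diff: "sympoly_const (a - b) = sympoly_const a - sympoly_const b"
  and sympoly_const_mult: "sympoly_const (a * b) = sympoly_const a * sympoly_const b"
  by (simp_all add: sympoly_const_def single_add single_diff mult_single)

lemma sympoly_const_power: "sympoly_const (a ^ n) = sympoly_const a ^ n"
  by (induction n) (simp_all add: sympoly_const_mult)

lemma lin_add: "lin (u + v) = lin u + lin v"
  by (simp add: lin_def single_add sum.distrib)

lemma lin_scale: "lin (c *s u) = sympoly_const c * lin u"
  by (simp add: lin_def sympoly_const_def sum_distrib_left mult_single)

lemma prod_eq_sympoly_const_mult_prod:
  fixes f g :: "'a \<Rightarrow> ('k::field, 'n) sympoly"
  assumes "finite A" and "\<And>x. x \<in> A \<Longrightarrow> \<exists>d. d \<noteq> 0 \<and> f x = sympoly_const d * g x"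
  shows "\<exists>D. D \<noteq> 0 \<and> prod f A = sympoly_const D * prod g A"
  using assms
proof (induction A rule: finite_induct)
  case empty
  show ?case
    by (intro exI[of _ 1]) simp
next
  case (insert a A)
  obtain d where d: "d \<noteq> 0" "f a = sympoly_const d * g a"
    using insert.prems by blast
  have "\<exists>D. D \<noteq> 0 \<and> prod f A = sympoly_const D * prod g A"
    by (rule insert.IH) (simp add: insert.prems)
  then obtain D where D: "D \<noteq> 0" "prod f A = sympoly_const D * prod g A"
    by blast
  have "prod f (insert a A) = sympoly_const (d * D) * prod g (insert a A)"
    using insert.hyps by (simp add: d D sympoly_const_mult mult_ac)
  then show ?case
    using d D by (intro exI[of _ "d * D"]) simp
qed

definition homogenize :: "nat \<Rightarrow> 'k::comm_ring_1 poly \<Rightarrow> ('k, 'n) sympoly \<Rightarrow> ('k, 'n) sympoly \<Rightarrow> ('k, 'n) sympoly"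
  where "homogenize n P x y = (\<Sum>j\<le>n. sympoly_const (Polynomial.coeff P j) * x ^ j * y ^ (n - j))"

lemma homogenize_diff:
  "homogenize n (P - Q) x y = homogenize n P x y - homogenize n Q x y"
  by (simp add: homogenize_def sympoly_const_diff left_diff_distrib sum_subtractf)

lemma homogenize_monom:
  assumes "j \<le> n"
  shows "homogenize n (Polynomial.monom 1 j) x y = x ^ j * y ^ (n - j)"
proof -
  have "homogenize n (Polynomial.monom 1 j) x y = (\<Sum>i\<le>n. if i = j then x ^ j * y ^ (n - j) else 0)"
    unfolding homogenize_def by (rule sum.cong) (auto simp: coeff_monom)
  then show ?thesis
    using assms by simp
qed

lemma homogenize_linear_factor:
  assumes "degree P \<le> n"
  shows "homogenize (Suc n) ([:c, 1:] * P) x y = (x + sympoly_const c * y) * homogenize n P x y"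
proof -
  have "homogenize (Suc n) (Polynomial.smult c P) x y
      = (\<Sum>j\<le>n. sympoly_const (c * Polynomial.coeff P j) * x ^ j * y ^ (Suc n - j))"
    using assms by (simp add: homogenize_def coeff_eq_0)
  also have "\<dots> = sympoly_const c * y * homogenize n P x y"
    by (simp add: homogenize_def sum_distrib_left sympoly_const_mult Suc_diff_le mult_ac)
  finally have smult: "homogenize (Suc n) (Polynomial.smult c P) x y = sympoly_const c * y * homogenize n P x y" .
  have "homogenize (Suc n) (pCons 0 P) x y
      = (\<Sum>j\<le>n. sympoly_const (Polynomial.coeff P j) * x ^ Suc j * y ^ (n - j))"
    unfolding homogenize_def by (subst sum.atMost_Suc_shift) simp
  also have "\<dots> = x * homogenize n P x y"
    by (simp add: homogenize_def sum_distrib_left mult_ac)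
  finally have shift: "homogenize (Suc n) (pCons 0 P) x y = x * homogenize n P x y" .
  have "[:c, 1:] * P = Polynomial.smult c P + pCons 0 P"
    by (simp add: mult_pCons_left)
  then show ?thesis
    using smult shift by (simp add: homogenize_def sympoly_const_add sum.distrib distrib_right)
qed

lemma prod_linear_forms_eq_homogenize:
  "finite A \<Longrightarrow> (\<Prod>c\<in>A. x + sympoly_const c * y) = homogenize (card A) (\<Prod>c\<in>A. [:c, 1:]) x y"
proof (induction A rule: finite_induct)
  case (insert a A)
  have "degree (\<Prod>c\<in>A. [:c, 1:]) \<le> card A"
    using degree_prod_sum_le[OF insert.hyps(1), of "\<lambda>c. [:c, 1:]"] by simp
  then have "homogenize (Suc (card A)) ([:a, 1:] * (\<Prod>c\<in>A. [:c, 1:])) x y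
      = (x + sympoly_const a * y) * homogenize (card A) (\<Prod>c\<in>A. [:c, 1:]) x y"
    by (rule homogenize_linear_factor)
  then show ?case
    using insert by simp
qed (simp add: homogenize_def)

lemma prod_finite_field_linear_forms:
  "(\<Prod>c\<in>(UNIV::'k::{field,finite} set). x + sympoly_const c * y) = x ^ CARD('k) - x * y ^ (CARD('k) - 1)"
proof -
  have "(\<Prod>c\<in>(UNIV::'k set). x + sympoly_const c * y)
      = homogenize CARD('k) (Polynomial.monom 1 CARD('k) - Polynomial.monom 1 1) x y"
    by (simp add: prod_linear_forms_eq_homogenize prod_X_plus_const_finite_field)
  also have "\<dots> = x ^ CARD('k) - x * y ^ (CARD('k) - 1)"
    by (simp add: homogenize_diff homogenize_monom Suc_leI)
  finally show ?thesis .
qed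

section \<open>Lines, hyperplanes and the products V_{H,U}\<close>

lemma span_singleton_scale:
  assumes "(d::'k::field) \<noteq> 0"
  shows "vec.span {d *s (u::'k ^ 'n::finite)} = vec.span {u}"
proof -
  have "inverse d *s (d *s u) \<in> vec.span {d *s u}"
    by (intro vec.span_scale vec.span_base) simp
  then have "u \<in> vec.span {d *s u}"
    using assms by simp
  moreover have "d *s u \<in> vec.span {u}"
    by (intro vec.span_scale vec.span_base) simp
  ultimately show ?thesis
    by (simp add: vec.span_eq)
qed

lemma span_singleton_subset_iff:
  assumes "vec.subspace H"
  shows "vec.span {u} \<subseteq> H \<longleftrightarrow> u \<in> H"
proof
  show "vec.span {u} \<subseteq> H \<Longrightarrow> u \<in> H"
    using vec.span_base[of u "{u}"] by blast
  show "u \<in> H \<Longrightarrow> vec.span {u} \<subseteq> H"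
    using assms by (intro vec.span_minimal) simp_all
qed

lemma line_rep_span_singleton:
  assumes "(u::'k::field ^ 'n::finite) \<noteq> 0"
  obtains d where "d \<noteq> 0" and "line_rep (vec.span {u}) = d *s u"
proof -
  have "u \<in> vec.span {u}"
    by (simp add: vec.span_base)
  with assms have "\<exists>v. v \<in> vec.span {u} \<and> v \<noteq> 0"
    by blast
  then have "line_rep (vec.span {u}) \<in> vec.span {u} \<and> line_rep (vec.span {u}) \<noteq> 0"
    unfolding line_rep_def by (rule someI_ex)
  then obtain d where "line_rep (vec.span {u}) = d *s u" "d *s u \<noteq> 0"
    by (auto simp: vec.span_singleton)
  then show thesis
    using that by auto
qed

lemma line_rep_lines_of:
  assumes "l \<in> lines_of U"
  shows "line_rep l \<noteq> 0" and "vec.span {line_rep l} = l"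
    and "vec.subspace U \<Longrightarrow> line_rep l \<in> U"
proof -
  obtain u where u: "l = vec.span {u}" "u \<in> U" "u \<noteq> 0"
    using assms by (auto simp: lines_of_def)
  moreover obtain d where "d \<noteq> 0" "line_rep l = d *s u"
    using line_rep_span_singleton[OF u(3)] unfolding u(1) by blast
  ultimately show "line_rep l \<noteq> 0" "vec.span {line_rep l} = l"
    and "vec.subspace U \<Longrightarrow> line_rep l \<in> U"
    by (simp_all add: span_singleton_scale vec.subspace_scale)
qed

lemma line_subset_subspace_iff:
  assumes "l \<in> lines_of U" and "vec.subspace H"
  shows "l \<subseteq> H \<longleftrightarrow> line_rep l \<in> H"
  using span_singleton_subset_iff[OF assms(2), of "line_rep l"] line_rep_lines_of(2)[OF assms(1)]
  by simp

lemma lin_line_rep_span_singleton: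
  assumes "u \<noteq> 0"
  obtains d where "d \<noteq> 0" and "lin (line_rep (vec.span {u})) = sympoly_const d * lin u"
proof -
  obtain d where "d \<noteq> 0" "line_rep (vec.span {u}) = d *s u"
    using line_rep_span_singleton[OF assms] by blast
  then show thesis
    using that by (simp add: lin_scale)
qed

lemma lin_dvd_VH:
  fixes u :: "'k::{field,finite} ^ 'n::finite"
  assumes "u \<in> U" and "u \<noteq> 0" and "u \<notin> H"
  shows "lin u dvd VH U H"
proof -
  have "u \<in> vec.span {u}"
    by (simp add: vec.span_base)
  with assms have "vec.span {u} \<in> {l \<in> lines_of U. \<not> l \<subseteq> H}"
    by (auto simp: lines_of_def)
  then have "lin (line_rep (vec.span {u})) dvd VH U H"
    unfolding VH_def by (intro dvd_prodI) simp_all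
  moreover obtain d where "lin (line_rep (vec.span {u})) = sympoly_const d * lin u"
    using lin_line_rep_span_singleton[OF assms(2)] by blast
  ultimately show ?thesis
    using dvd_mult_right by simp
qed

lemma VH_inter:
  assumes "vec.subspace U" and "vec.subspace H"
  shows "VH U (H \<inter> U) = VH U H"
proof -
  have "l \<subseteq> H \<inter> U \<longleftrightarrow> l \<subseteq> H" if "l \<in> lines_of U" for l
  proof -
    have "line_rep l \<in> U"
      using line_rep_lines_of(3)[OF that assms(1)] .
    then show ?thesis
      using line_subset_subspace_iff[OF that] assms vec.subspace_inter by simp
  qed
  then have "{l \<in> lines_of U. \<not> l \<subseteq> H \<inter> U} = {l \<in> lines_of U. \<not> l \<subseteq> H}"
    by blast
  then show ?thesis
    unfolding VH_def by simp
qed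

locale line_complement =
  fixes y :: "'k::field ^ 'n::finite" and W :: "('k ^ 'n) set"
  assumes y_nonzero: "y \<noteq> 0"
    and subspace_W: "vec.subspace W"
    and W_inter_line: "W \<inter> vec.span {y} = {0}"
    and W_plus_line: "{w + z | w z. w \<in> W \<and> z \<in> vec.span {y}} = UNIV"
begin

lemma decompose:
  obtains w c where "w \<in> W" and "u = w + c *s y"
proof -
  have "u \<in> {w + z | w z. w \<in> W \<and> z \<in> vec.span {y}}"
    using W_plus_line by simp
  then show thesis
    using that by (auto simp: vec.span_singleton)
qed

lemma decompose_unique:
  assumes "w1 \<in> W" and "w2 \<in> W" and "w1 + c1 *s y = w2 + c2 *s y"
  shows "w1 = w2" and "c1 = c2"
proof -
  have diff: "w1 - w2 = (c2 - c1) *s y"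
    using assms(3) by (simp add: algebra_simps vec.scale_left_diff_distrib)
  have "w1 - w2 \<in> W"
    using assms(1,2) subspace_W vec.subspace_diff by blast
  moreover have "w1 - w2 \<in> vec.span {y}"
    unfolding diff by (intro vec.span_scale vec.span_base) simp
  ultimately have "w1 - w2 = 0"
    using W_inter_line by blast
  then show "w1 = w2"
    by simp
  from \<open>w1 - w2 = 0\<close> have "(c2 - c1) *s y = 0"
    by (simp add: diff)
  then show "c1 = c2"
    using y_nonzero by simp
qed

lemma y_notin_W: "y \<notin> W"
  using W_inter_line y_nonzero vec.span_base[of y "{y}"] by blast

lemma add_scale_y_nonzero:
  "w \<in> W \<Longrightarrow> w \<noteq> 0 \<Longrightarrow> w + c *s y \<noteq> 0"
  using decompose_unique(1)[of w 0 c 0] subspace_W by (auto simp: vec.subspace_0)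

lemma span_insert_y_inter_W:
  assumes "vec.subspace H" and "y \<in> H"
  shows "vec.span (insert y (H \<inter> W)) = H"
proof
  show "vec.span (insert y (H \<inter> W)) \<subseteq> H"
    using assms by (intro vec.span_minimal) auto
  show "H \<subseteq> vec.span (insert y (H \<inter> W))"
  proof
    fix h assume h: "h \<in> H"
    obtain w c where w: "w \<in> W" "h = w + c *s y"
      by (rule decompose)
    have "w = h - c *s y"
      using w by simp
    then have "w \<in> H"
      using h assms by (simp add: vec.subspace_diff vec.subspace_scale)
    with w have "w \<in> vec.span (insert y (H \<inter> W))" and "c *s y \<in> vec.span (insert y (H \<inter> W))"
      by (simp_all add: vec.span_base vec.span_scale)
    then show "h \<in> vec.span (insert y (H \<inter> W))"
      unfolding w(2) by (rule vec.span_add)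
  qed
qed

lemma dim_eq_dim_inter_W_Suc:
  assumes "vec.subspace H" and "y \<in> H"
  shows "vec.dim H = Suc (vec.dim (H \<inter> W))"
proof -
  have "vec.span (H \<inter> W) = H \<inter> W"
    using assms(1) subspace_W by (simp add: vec.subspace_inter)
  then have "y \<notin> vec.span (H \<inter> W)"
    using y_notin_W by blast
  then have "vec.dim (insert y (H \<inter> W)) = Suc (vec.dim (H \<inter> W))"
    by (simp add: vec.dim_insert)
  moreover have "vec.dim H = vec.dim (vec.span (insert y (H \<inter> W)))"
    by (simp only: span_insert_y_inter_W[OF assms])
  ultimately show ?thesis
    by simp
qed

lemma inter_W_span_insert_y:
  assumes "vec.subspace H'" and "H' \<subseteq> W"
  shows "vec.span (insert y H') \<inter> W = H'"
proof
  show "H' \<subseteq> vec.span (insert y H') \<inter> W"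
    using assms(2) vec.span_superset by blast
  show "vec.span (insert y H') \<inter> W \<subseteq> H'"
  proof
    fix x assume x: "x \<in> vec.span (insert y H') \<inter> W"
    then obtain c where "x - c *s y \<in> vec.span H'"
      by (auto simp: vec.span_insert)
    moreover have "vec.span H' = H'"
      using assms(1) by simp
    ultimately have h: "x - c *s y \<in> H'"
      by simp
    have "x + 0 *s y = (x - c *s y) + c *s y"
      by simp
    then have "x = x - c *s y"
      using decompose_unique(1) x h assms(2) by blast
    with h show "x \<in> H'"
      by simp
  qed
qed

lemma hyperplane_inter_W:
  assumes "H \<in> hyperplanes_of UNIV" and "y \<in> H"
  shows "H \<inter> W \<in> hyperplanes_of W"
proof -
  have "vec.subspace H" and "vec.dim H + 1 = vec.dim (UNIV :: ('k ^ 'n) set)"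
    using assms(1) by (auto simp: hyperplanes_of_def)
  moreover have "vec.dim (UNIV :: ('k ^ 'n) set) = vec.dim W + 1"
    using dim_eq_dim_inter_W_Suc[of UNIV] by simp
  ultimately show ?thesis
    using dim_eq_dim_inter_W_Suc[OF _ assms(2)] subspace_W
    by (auto simp: hyperplanes_of_def vec.subspace_inter)
qed

lemma hyperplane_span_insert_y:
  assumes "H' \<in> hyperplanes_of W"
  shows "vec.span (insert y H') \<in> hyperplanes_of UNIV"
    and "y \<in> vec.span (insert y H')"
    and "vec.span (insert y H') \<inter> W = H'"
proof -
  have H': "vec.subspace H'" "H' \<subseteq> W" "vec.dim H' + 1 = vec.dim W"
    using assms by (auto simp: hyperplanes_of_def)
  show y: "y \<in> vec.span (insert y H')"
    by (simp add: vec.span_base)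
  show inter: "vec.span (insert y H') \<inter> W = H'"
    using inter_W_span_insert_y[OF H'(1,2)] .
  have "vec.dim (UNIV :: ('k ^ 'n) set) = vec.dim W + 1"
    using dim_eq_dim_inter_W_Suc[of UNIV] by simp
  then show "vec.span (insert y H') \<in> hyperplanes_of UNIV"
    using dim_eq_dim_inter_W_Suc[OF _ y] inter H'(3) by (simp add: hyperplanes_of_def)
qed

lemma inj_on_shifted_lines:
  "inj_on (\<lambda>(l, c). vec.span {line_rep l + c *s y}) (lines_of W \<times> UNIV)"
proof (rule inj_onI, clarsimp)
  fix l1 l2 c1 c2
  assume l1: "l1 \<in> lines_of W" and l2: "l2 \<in> lines_of W"
    and eq: "vec.span {line_rep l1 + c1 *s y} = vec.span {line_rep l2 + c2 *s y}"
  have u1: "line_rep l1 \<in> W" "line_rep l1 \<noteq> 0"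
    using line_rep_lines_of[OF l1] subspace_W by simp_all
  have u2: "line_rep l2 \<in> W" "line_rep l2 \<noteq> 0"
    using line_rep_lines_of[OF l2] subspace_W by simp_all
  have "line_rep l1 + c1 *s y \<in> vec.span {line_rep l2 + c2 *s y}"
    unfolding eq[symmetric] by (simp add: vec.span_base)
  then obtain d where "line_rep l1 + c1 *s y = d *s (line_rep l2 + c2 *s y)"
    by (auto simp: vec.span_singleton)
  then have "line_rep l1 + c1 *s y = d *s line_rep l2 + (d * c2) *s y"
    by (simp add: vec.scale_right_distrib)
  moreover have "d *s line_rep l2 \<in> W"
    using u2 subspace_W by (simp add: vec.subspace_scale)
  ultimately have u: "line_rep l1 = d *s line_rep l2" and c: "c1 = d * c2"
    using decompose_unique u1(1) by blast+
  have "d \<noteq> 0"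
    using u u1(2) by auto
  then have "l1 = l2"
    using u span_singleton_scale line_rep_lines_of(2) l1 l2 by metis
  then have "d = 1"
    using u u2(2) by (metis vec.scale_cancel_right vec.scale_one)
  then show "l1 = l2 \<and> c1 = c2"
    using \<open>l1 = l2\<close> c by simp
qed

lemma image_shifted_lines:
  assumes "vec.subspace H" and "y \<in> H"
  shows "(\<lambda>(l, c). vec.span {line_rep l + c *s y}) ` ({l \<in> lines_of W. \<not> l \<subseteq> H} \<times> UNIV)
    = {l \<in> lines_of UNIV. \<not> l \<subseteq> H}"
proof (intro equalityI subsetI)
  fix x assume "x \<in> (\<lambda>(l, c). vec.span {line_rep l + c *s y}) ` ({l \<in> lines_of W. \<not> l \<subseteq> H} \<times> UNIV)"
  then obtain l c where l: "l \<in> lines_of W" "\<not> l \<subseteq> H" and x: "x = vec.span {line_rep l + c *s y}"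
    by auto
  have u: "line_rep l \<in> W" "line_rep l \<noteq> 0" "line_rep l \<notin> H"
    using line_rep_lines_of[OF l(1)] line_subset_subspace_iff[OF l(1) assms(1)] l(2) subspace_W
    by simp_all
  have "line_rep l + c *s y \<noteq> 0"
    using add_scale_y_nonzero u(1,2) .
  moreover have "line_rep l + c *s y \<notin> H"
  proof
    assume "line_rep l + c *s y \<in> H"
    then have "(line_rep l + c *s y) - c *s y \<in> H"
      using assms by (intro vec.subspace_diff vec.subspace_scale)
    with u(3) show False
      by simp
  qed
  ultimately show "x \<in> {l \<in> lines_of UNIV. \<not> l \<subseteq> H}"
    unfolding x lines_of_def using span_singleton_subset_iff[OF assms(1)] by blast
next
  fix x assume "x \<in> {l \<in> lines_of UNIV. \<not> l \<subseteq> H}"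
  then obtain u where x: "x = vec.span {u}" and "u \<noteq> 0" and "u \<notin> H"
    using span_singleton_subset_iff[OF assms(1)] by (auto simp: lines_of_def)
  obtain w c where w: "w \<in> W" "u = w + c *s y"
    by (rule decompose)
  have "w \<notin> H"
  proof
    assume "w \<in> H"
    then have "w + c *s y \<in> H"
      using assms by (intro vec.subspace_add vec.subspace_scale)
    with \<open>u \<notin> H\<close> w(2) show False
      by simp
  qed
  then have "w \<noteq> 0"
    using assms(1) vec.subspace_0 by blast
  define l where "l = vec.span {w}"
  have l: "l \<in> {l \<in> lines_of W. \<not> l \<subseteq> H}"
    using w(1) \<open>w \<noteq> 0\<close> \<open>w \<notin> H\<close> span_singleton_subset_iff[OF assms(1)]
    by (auto simp: l_def lines_of_def)
  obtain d where d: "d \<noteq> 0" "line_rep l = d *s w"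
    using line_rep_span_singleton[OF \<open>w \<noteq> 0\<close>] unfolding l_def by blast
  have "line_rep l + (d * c) *s y = d *s u"
    using d(2) w(2) by (simp add: vec.scale_right_distrib)
  then have "vec.span {line_rep l + (d * c) *s y} = x"
    unfolding x using span_singleton_scale[OF d(1)] by simp
  with l show "x \<in> (\<lambda>(l, c). vec.span {line_rep l + c *s y}) ` ({l \<in> lines_of W. \<not> l \<subseteq> H} \<times> UNIV)"
    by (intro image_eqI[of _ _ "(l, d * c)"]) auto
qed

end

locale finite_line_complement = line_complement y W
  for y :: "'k::{field,finite} ^ 'n::finite" and W
begin

lemma VH_eq_const_mult_prod:
  assumes "vec.subspace H" and "y \<in> H"
  obtains D where "D \<noteq> 0"
    and "VH UNIV H = sympoly_const D * (\<Prod>l\<in>{l \<in> lines_of W. \<not> l \<subseteq> H}.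
           lin (line_rep l) ^ CARD('k) - lin (line_rep l) * lin y ^ (CARD('k) - 1))"
proof -
  let ?L = "{l \<in> lines_of W. \<not> l \<subseteq> H}"
  let ?shift = "\<lambda>(l, c). vec.span {line_rep l + c *s y}"
  let ?form = "\<lambda>(l, c). lin (line_rep l) + sympoly_const c * lin y"
  have "inj_on ?shift (?L \<times> UNIV)"
    by (rule inj_on_subset[OF inj_on_shifted_lines]) auto
  then have bij: "bij_betw ?shift (?L \<times> UNIV) {l \<in> lines_of UNIV. \<not> l \<subseteq> H}"
    using image_shifted_lines[OF assms] by (simp add: bij_betw_def)
  have "\<exists>d. d \<noteq> 0 \<and> lin (line_rep (?shift x)) = sympoly_const d * ?form x"
    if x_mem: "x \<in> ?L \<times> UNIV" for x
  proof -
    obtain l c where x: "x = (l, c)" and l: "l \<in> lines_of W"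
      using x_mem by (cases x) auto
    have "line_rep l + c *s y \<noteq> 0"
      using line_rep_lines_of[OF l] subspace_W by (simp add: add_scale_y_nonzero)
    then obtain d where "d \<noteq> 0"
      and "lin (line_rep (vec.span {line_rep l + c *s y})) = sympoly_const d * lin (line_rep l + c *s y)"
      by (rule lin_line_rep_span_singleton)
    then show ?thesis
      unfolding x by (intro exI[of _ d]) (simp add: lin_add lin_scale)
  qed
  then have "\<exists>D. D \<noteq> 0 \<and> (\<Prod>x\<in>?L \<times> UNIV. lin (line_rep (?shift x)))
      = sympoly_const D * (\<Prod>x\<in>?L \<times> UNIV. ?form x)"
    by (intro prod_eq_sympoly_const_mult_prod) simp_all
  then obtain D where "D \<noteq> 0"
    and D: "(\<Prod>x\<in>?L \<times> UNIV. lin (line_rep (?shift x))) = sympoly_const D * (\<Prod>x\<in>?L \<times> UNIV. ?form x)"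
    by blast
  have "VH UNIV H = (\<Prod>x\<in>?L \<times> UNIV. lin (line_rep (?shift x)))"
    unfolding VH_def by (rule prod.reindex_bij_betw[OF bij, symmetric])
  moreover have "(\<Prod>x\<in>?L \<times> UNIV. ?form x)
      = (\<Prod>l\<in>?L. \<Prod>c\<in>UNIV. lin (line_rep l) + sympoly_const c * lin y)"
    by (rule prod.cartesian_product[symmetric])
  ultimately show thesis
    using that \<open>D \<noteq> 0\<close> D by (simp add: prod_finite_field_linear_forms)
qed

lemma VH_power_cong:
  assumes "CARD('k) = CHAR('k) ^ e" and "k = CARD('k) ^ a * r" and "r \<le> CARD('k) - 1"
    and "vec.subspace H" and "y \<in> H"
  obtains D where "D \<noteq> 0" and "lin y ^ k dvd VH UNIV H ^ k - sympoly_const D * VH W H ^ (CARD('k) * k)"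
proof -
  let ?L = "{l \<in> lines_of W. \<not> l \<subseteq> H}"
  let ?P = "\<lambda>l. lin (line_rep l) ^ CARD('k) - lin (line_rep l) * lin y ^ (CARD('k) - 1)"
  obtain D where "D \<noteq> 0" and D: "VH UNIV H = sympoly_const D * (\<Prod>l\<in>?L. ?P l)"
    using VH_eq_const_mult_prod[OF assms(4,5)] by blast
  have VH_W: "VH W H = (\<Prod>l\<in>?L. lin (line_rep l))"
    using VH_inter[OF subspace_W assms(4)] by (simp add: VH_def)
  have "prime CHAR(('k, 'n) sympoly)"
    by (simp add: prime_CHAR_semidom finite_imp_CHAR_pos)
  then have "lin y ^ k dvd ?P l ^ k - lin (line_rep l) ^ (CARD('k) * k)" for l
    using assms(1-3) by (intro power_dvd_frobenius_form_power_diff[where e = e and a = a and r = r]) simp_all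
  then have "lin y ^ k dvd (\<Prod>l\<in>?L. ?P l ^ k) - (\<Prod>l\<in>?L. lin (line_rep l) ^ (CARD('k) * k))"
    by (rule dvd_prod_diff)
  then have "lin y ^ k dvd sympoly_const (D ^ k)
      * ((\<Prod>l\<in>?L. ?P l ^ k) - (\<Prod>l\<in>?L. lin (line_rep l) ^ (CARD('k) * k)))"
    by (rule dvd_mult)
  then have "lin y ^ k dvd VH UNIV H ^ k - sympoly_const (D ^ k) * VH W H ^ (CARD('k) * k)"
    by (simp add: D VH_W power_mult_distrib sympoly_const_power prod_power_distrib right_diff_distrib)
  with \<open>D \<noteq> 0\<close> show thesis
    by (intro that[of "D ^ k"]) simp_all
qed

lemma VH_power_mem_ideal_W:
  assumes "CARD('k) = CHAR('k) ^ e" and "k = CARD('k) ^ a * r" and "r \<le> CARD('k) - 1"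
    and "H \<in> hyperplanes_of UNIV"
  shows "VH UNIV H ^ k \<in> gen_ideal (insert (lin y ^ k) {VH W H' ^ (CARD('k) * k) | H'. H' \<in> hyperplanes_of W})"
proof (cases "y \<in> H")
  case True
  have H: "vec.subspace H"
    using assms(4) by (simp add: hyperplanes_of_def)
  obtain D where "lin y ^ k dvd VH UNIV H ^ k - sympoly_const D * VH W H ^ (CARD('k) * k)"
    using VH_power_cong[OF assms(1-3) H True] by blast
  then have "lin y ^ k dvd VH UNIV H ^ k - sympoly_const D * VH W (H \<inter> W) ^ (CARD('k) * k)"
    using VH_inter[OF subspace_W H] by simp
  moreover have "VH W (H \<inter> W) ^ (CARD('k) * k) \<in> {VH W H' ^ (CARD('k) * k) | H'. H' \<in> hyperplanes_of W}"
    using hyperplane_inter_W[OF assms(4) True] by blast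
  ultimately show ?thesis
    by (rule gen_ideal_insert_if_dvd_diff)
next
  case False
  then have "lin y dvd VH UNIV H"
    using y_nonzero by (intro lin_dvd_VH) simp_all
  then show ?thesis
    by (intro gen_ideal_insert_if_dvd dvd_power_same)
qed

lemma VH_W_power_mem_ideal:
  assumes "CARD('k) = CHAR('k) ^ e" and "k = CARD('k) ^ a * r" and "r \<le> CARD('k) - 1"
    and "H' \<in> hyperplanes_of W"
  shows "VH W H' ^ (CARD('k) * k) \<in> gen_ideal (insert (lin y ^ k) {VH UNIV H ^ k | H. H \<in> hyperplanes_of UNIV})"
proof -
  define H where "H = vec.span (insert y H')"
  have H: "H \<in> hyperplanes_of UNIV" "y \<in> H" "H \<inter> W = H'"
    unfolding H_def using hyperplane_span_insert_y[OF assms(4)] by simp_all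
  then have "vec.subspace H"
    by (simp add: hyperplanes_of_def)
  then obtain D where "D \<noteq> 0"
    and dvd: "lin y ^ k dvd VH UNIV H ^ k - sympoly_const D * VH W H' ^ (CARD('k) * k)"
    using VH_power_cong[OF assms(1-3) _ H(2)] VH_inter[OF subspace_W] H(3) by metis
  have "sympoly_const D * sympoly_const (inverse D) = (1 :: ('k, 'n) sympoly)"
    using \<open>D \<noteq> 0\<close> by (simp flip: sympoly_const_mult)
  from this dvd have "lin y ^ k dvd VH W H' ^ (CARD('k) * k) - sympoly_const (inverse D) * VH UNIV H ^ k"
    by (rule dvd_diff_mult_swap)
  moreover have "VH UNIV H ^ k \<in> {VH UNIV H ^ k | H. H \<in> hyperplanes_of UNIV}"
    using H(1) by blast
  ultimately show ?thesis
    by (rule gen_ideal_insert_if_dvd_diff)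
qed

end

theorem lemma4p5:
  fixes y :: "'k::{field, finite} ^ 'n::finite"
    and W :: "('k ^ 'n) set"
    and p q a r k :: nat
  assumes "prime p" and "CARD('k) = q" and "\<exists>e. q = p ^ e"
    and "k = q ^ a * r" and "1 \<le> r" and "r \<le> q - 1"
    and "y \<noteq> 0"
    and "vec.subspace W"
    and "W \<inter> vec.span {y} = {0}"
    and "{w + z | w z. w \<in> W \<and> z \<in> vec.span {y}} = UNIV"
  shows "ideal_sum (I_ideal UNIV k) (gen_ideal {lin y ^ k})
       = ideal_sum (I_ideal W (q * k)) (gen_ideal {lin y ^ k})"
proof -
  interpret finite_line_complement y W
    using assms(7-10) by unfold_locales
  obtain e where "CARD('k) = p ^ e"
    using assms(2,3) by blast
  moreover from this have "CHAR('k) = p"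
    using assms(1) by (rule CHAR_eq_if_card_eq_prime_power[rotated])
  ultimately have k: "CARD('k) = CHAR('k) ^ e" "k = CARD('k) ^ a * r" "r \<le> CARD('k) - 1"
    using assms(2,4,6) by simp_all
  show ?thesis
    unfolding I_ideal_def assms(2)[symmetric]
    by (intro ideal_sum_principal_eqI subsetI)
      (auto intro: VH_power_mem_ideal_W[OF k] VH_W_power_mem_ideal[OF k])
qed

end
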